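(* Consider the infinite-dimensional Poisson manifold with coordinates $p_1,p_2,p_3,\dots,u_1,u_2,u_3,\dots$ and Poisson bracket satisfying $\{p_i,p_k\}=0$, $\{u_i,u_k\}=0$, $\{u_i,p_k\}=J_{ki}$ ($i,k\ge1$), where $J_{ki}$ are functions of the coordinates. Let $p^*_n=P_n(-p_1,-\tfrac12p_2,-\tfrac13p_3,\dots)$ for $n\ge1$, where the Schur polynomials $P_n$ are defined by $\exp\big(\sum_{n\ge1}z^nt_n\big)=\sum_{m\ge0}z^mP_m(t_1,t_2,\dots)$, and let $J^*_{ki}:=\{u_i,p^*_k\}$ denote the Poisson tensor in the coordinates $(p^*,u)$. Let $I(\Gamma_\infty)$ be the ideal generated by $h^*_n=p^*_n-u_{n-1}$, $n=2,3,4,\dots$ (the family of ideals of the family of normal rational curves of the big cell). If $$\big(J^*_{i,k-1}-J^*_{k,i-1}\big)\big|_{\Gamma_\infty}=0\qquad\text{for all } i,k=2,3,4,\dots,$$ i.e. these functions lie in $I(\Gamma_\infty)$, then $I(\Gamma_\infty)$ is a Poisson ideal: $\{I(\Gamma_\infty),I(\Gamma_\infty)\}\subset I(\Gamma_\infty)$.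
   Context: Here $p_1,p_2,\dots$ play the role of the elements $p_i=z^i+\sum_{k\ge1}H^i_kz^{-k}$ of a point of the big cell closed under multiplication, $u_k=H^1_k$, and the family of normal rational curves is given by the relations $p_2=p_1^2-2u_1$, $p_3=p_1^3-3u_1p_1-3u_2$, $\dots$, which are equivalent to $p^*_n=u_{n-1}$, $n\ge2$; $\Gamma_\infty$ denotes this family (zero set of the ideal). A Poisson ideal is an ideal closed under the Poisson bracket. *)

theory Defs
  imports Complex_Main
begin

definition poisson_bracket :: "('a::{real_algebra_1,comm_ring_1} \<Rightarrow> 'a \<Rightarrow> 'a) \<Rightarrow> bool" where
  "poisson_bracket B \<longleftrightarrow>
     (\<forall>a b c. B (a + b) c = B a c + B b c) \<and>
     (\<forall>r a c. B (r *\<^sub>R a) c = r *\<^sub>R B a c) \<and>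
     (\<forall>a b. B a b = - B b a) \<and>
     (\<forall>a b c. B a (b * c) = B a b * c + b * B a c) \<and>
     (\<forall>a b c. B a (B b c) + B b (B c a) + B c (B a b) = 0)"

text \<open>Schur polynomials, as the coefficient of z^m in
  exp(sum_{n>=1} z^n t_n) = sum_j (sum_n z^n t_n)^j / j!.\<close>
definition schur :: "nat \<Rightarrow> (nat \<Rightarrow> 'a::{real_algebra_1,comm_ring_1}) \<Rightarrow> 'a" where
  "schur m t = (\<Sum>j\<le>m. (1 / fact j) *\<^sub>R
      (\<Sum>ns\<in>{ns. length ns = j \<and> (\<forall>n\<in>set ns. 1 \<le> n) \<and> sum_list ns = m}.
          prod_list (map t ns)))"

definition pstar :: "(nat \<Rightarrow> 'a::{real_algebra_1,comm_ring_1}) \<Rightarrow> nat \<Rightarrow> 'a" where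
  "pstar p n = schur n (\<lambda>k. - ((1 / real k) *\<^sub>R p k))"

definition gen_ideal :: "'a::comm_ring_1 set \<Rightarrow> 'a set" where
  "gen_ideal G = {x. \<exists>F c. finite F \<and> F \<subseteq> G \<and> x = (\<Sum>g\<in>F. c g * g)}"

definition I_Gamma :: "(nat \<Rightarrow> 'a::{real_algebra_1,comm_ring_1}) \<Rightarrow> (nat \<Rightarrow> 'a) \<Rightarrow> 'a set" where
  "I_Gamma p u = gen_ideal {pstar p n - u (n - 1) | n. n \<ge> 2}"

end

theory Submission
  imports Defs
begin

text \<open>The bracket is a derivation in each argument, so it maps a generated ideal into itself as
  soon as the brackets of the generators lie in the ideal. For the generators p*_i - u_(i-1): the p*_i
  are polynomials in the Poisson-commuting p and so Poisson-commute, and the u Poisson-commute, hence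
  the bracket of two generators reduces to J*_(i,k-1) - J*_(k,i-1), which lies in the ideal by hypothesis.\<close>

locale derivation =
  fixes D :: "'a::{real_algebra_1,comm_ring_1} \<Rightarrow> 'a"
  assumes add: "D (a + b) = D a + D b"
    and scaleR: "D (r *\<^sub>R a) = r *\<^sub>R D a"
    and mult: "D (a * b) = D a * b + a * D b"
begin

lemma zero: "D 0 = 0"
  using add[of 0 0] by simp

lemma one: "D 1 = 0"
  using mult[of 1 1] by simp

lemma minus: "D (- a) = - D a"
  using add[of a "- a"] zero by (simp add: add_eq_0_iff)

lemma diff: "D (a - b) = D a - D b"
  using add[of a "- b"] by (simp add: minus)

lemma sum: "D (sum g A) = (\<Sum>x\<in>A. D (g x))"
  by (induction A rule: infinite_finite_induct) (simp_all add: zero add)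

lemma prod_list_map_eq_0: "(\<And>n. D (t n) = 0) \<Longrightarrow> D (prod_list (map t ns)) = 0"
  by (induction ns) (simp_all add: one mult)

lemma schur_eq_0: "(\<And>k. D (t k) = 0) \<Longrightarrow> D (schur m t) = 0"
  unfolding schur_def by (simp add: sum scaleR prod_list_map_eq_0)

lemma pstar_eq_0:
  assumes "\<And>k. 1 \<le> k \<Longrightarrow> D (p k) = 0"
  shows "D (pstar p n) = 0"
  unfolding pstar_def
proof (rule schur_eq_0)
  fix k
  show "D (- ((1 / real k) *\<^sub>R p k)) = 0"
    using assms[of k] by (cases "k = 0") (simp_all add: minus scaleR zero)
qed

end

context
  fixes B :: "'a::{real_algebra_1,comm_ring_1} \<Rightarrow> 'a \<Rightarrow> 'a"
  assumes B: "poisson_bracket B"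
begin

lemma poisson_bracket_antisym: "B a b = - B b a"
  using B unfolding poisson_bracket_def by blast

lemma poisson_bracket_derivation_right: "derivation (B a)"
proof
  fix x y r
  show "B a (x + y) = B a x + B a y"
    using B unfolding poisson_bracket_def by (metis minus_add_distrib)
  show "B a (r *\<^sub>R x) = r *\<^sub>R B a x"
    using B unfolding poisson_bracket_def by (metis scaleR_minus_right)
  show "B a (x * y) = B a x * y + x * B a y"
    using B unfolding poisson_bracket_def by blast
qed

lemma poisson_bracket_derivation_left: "derivation (\<lambda>x. B x c)"
proof
  fix x y r
  show "B (x + y) c = B x c + B y c"
    using B unfolding poisson_bracket_def by blast
  show "B (r *\<^sub>R x) c = r *\<^sub>R B x c"
    using B unfolding poisson_bracket_def by blast
  show "B (x * y) c = B x c * y + x * B y c"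
    using derivation.mult[OF poisson_bracket_derivation_right, of c x y]
    by (simp add: poisson_bracket_antisym[of _ c] algebra_simps)
qed

end

lemma gen_ideal_0: "0 \<in> gen_ideal G"
  unfolding gen_ideal_def by (intro CollectI exI[of _ "{}"]) simp

lemma gen_ideal_generator: "g \<in> G \<Longrightarrow> g \<in> gen_ideal G"
  unfolding gen_ideal_def by (intro CollectI exI[of _ "{g}"] exI[of _ "\<lambda>_. 1"]) simp

lemma gen_ideal_add:
  assumes "x \<in> gen_ideal G" "y \<in> gen_ideal G"
  shows "x + y \<in> gen_ideal G"
proof -
  obtain F1 c1 where F1: "finite F1" "F1 \<subseteq> G" "x = (\<Sum>g\<in>F1. c1 g * g)"
    using assms(1) unfolding gen_ideal_def by blast
  obtain F2 c2 where F2: "finite F2" "F2 \<subseteq> G" "y = (\<Sum>g\<in>F2. c2 g * g)"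
    using assms(2) unfolding gen_ideal_def by blast
  define c1' c2' where "c1' g = (if g \<in> F1 then c1 g else 0)"
    and "c2' g = (if g \<in> F2 then c2 g else 0)" for g
  have "x = (\<Sum>g\<in>F1 \<union> F2. c1' g * g)"
    unfolding F1(3) c1'_def using F1 F2 by (intro sum.mono_neutral_cong_left) auto
  moreover have "y = (\<Sum>g\<in>F1 \<union> F2. c2' g * g)"
    unfolding F2(3) c2'_def using F1 F2 by (intro sum.mono_neutral_cong_left) auto
  ultimately have "x + y = (\<Sum>g\<in>F1 \<union> F2. (c1' g + c2' g) * g)"
    by (simp add: distrib_right sum.distrib)
  with F1 F2 show ?thesis
    unfolding gen_ideal_def by (intro CollectI exI[of _ "F1 \<union> F2"] exI[of _ "\<lambda>g. c1' g + c2' g"]) simp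
qed

lemma gen_ideal_mult_left:
  assumes "x \<in> gen_ideal G"
  shows "a * x \<in> gen_ideal G"
proof -
  obtain F c where F: "finite F" "F \<subseteq> G" "x = (\<Sum>g\<in>F. c g * g)"
    using assms unfolding gen_ideal_def by blast
  then have "a * x = (\<Sum>g\<in>F. (a * c g) * g)"
    by (simp add: sum_distrib_left mult.assoc)
  with F show ?thesis
    unfolding gen_ideal_def by (intro CollectI exI[of _ F] exI[of _ "\<lambda>g. a * c g"]) simp
qed

lemma gen_ideal_sum:
  "(\<And>x. x \<in> A \<Longrightarrow> f x \<in> gen_ideal G) \<Longrightarrow> sum f A \<in> gen_ideal G"
  by (induction A rule: infinite_finite_induct) (simp_all add: gen_ideal_0 gen_ideal_add)

lemma (in derivation) maps_gen_ideal:
  assumes "\<And>g. g \<in> G \<Longrightarrow> D g \<in> gen_ideal G"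
    and "x \<in> gen_ideal G"
  shows "D x \<in> gen_ideal G"
proof -
  obtain F c where F: "F \<subseteq> G" "x = (\<Sum>g\<in>F. c g * g)"
    using assms(2) unfolding gen_ideal_def by blast
  have "D (c g * g) \<in> gen_ideal G" if "g \<in> F" for g
    using that F(1) unfolding mult
    by (intro gen_ideal_add gen_ideal_mult_left gen_ideal_generator assms(1)) auto
  then show ?thesis
    unfolding F(2) sum by (rule gen_ideal_sum)
qed

lemma gen_ideal_closed_under_biderivation:
  assumes "\<And>a. derivation (B a)" and "\<And>c. derivation (\<lambda>x. B x c)"
    and "\<And>g h. g \<in> G \<Longrightarrow> h \<in> G \<Longrightarrow> B g h \<in> gen_ideal G"
    and "a \<in> gen_ideal G" "b \<in> gen_ideal G"
  shows "B a b \<in> gen_ideal G"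
proof -
  have "B a h \<in> gen_ideal G" if "h \<in> G" for h
    by (rule derivation.maps_gen_ideal[OF assms(2)]) (use assms(3)[OF _ that] assms(4) in auto)
  then show ?thesis
    by (rule derivation.maps_gen_ideal[OF assms(1) _ assms(5)])
qed

lemma poisson_bracket_pstar_pstar:
  assumes "poisson_bracket B"
    and "\<And>i k. 1 \<le> i \<Longrightarrow> 1 \<le> k \<Longrightarrow> B (p i) (p k) = 0"
  shows "B (pstar p i) (pstar p k) = 0"
proof -
  have "B (pstar p i) (p m) = 0" if "1 \<le> m" for m
    using derivation.pstar_eq_0[OF poisson_bracket_derivation_left[OF assms(1)]] assms(2) that
    by blast
  then show ?thesis
    using derivation.pstar_eq_0[OF poisson_bracket_derivation_right[OF assms(1)]] by blast
qed

lemma poisson_bracket_Gamma_generators: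
  assumes "poisson_bracket B"
    and "\<And>i k. 1 \<le> i \<Longrightarrow> 1 \<le> k \<Longrightarrow> B (p i) (p k) = 0"
    and "\<And>i k. 1 \<le> i \<Longrightarrow> 1 \<le> k \<Longrightarrow> B (u i) (u k) = 0"
    and "2 \<le> i" "2 \<le> k"
  shows "B (pstar p i - u (i - 1)) (pstar p k - u (k - 1))
    = B (u (k - 1)) (pstar p i) - B (u (i - 1)) (pstar p k)"
proof -
  have "B (pstar p i - u (i - 1)) (pstar p k - u (k - 1))
      = B (pstar p i) (pstar p k) - B (pstar p i) (u (k - 1))
        - B (u (i - 1)) (pstar p k) + B (u (i - 1)) (u (k - 1))"
    using derivation.diff[OF poisson_bracket_derivation_left[OF assms(1)]]
      derivation.diff[OF poisson_bracket_derivation_right[OF assms(1)]]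
    by simp
  also have "\<dots> = B (u (k - 1)) (pstar p i) - B (u (i - 1)) (pstar p k)"
    using poisson_bracket_pstar_pstar[OF assms(1,2)] assms(3)[of "i - 1" "k - 1"] assms(4,5)
      poisson_bracket_antisym[OF assms(1), of "pstar p i" "u (k - 1)"]
    by simp
  finally show ?thesis .
qed

theorem proposition5:
  fixes B :: "'a::{real_algebra_1,comm_ring_1} \<Rightarrow> 'a \<Rightarrow> 'a"
    and p u :: "nat \<Rightarrow> 'a"
  assumes "poisson_bracket B"
    and "\<And>i k. 1 \<le> i \<Longrightarrow> 1 \<le> k \<Longrightarrow> B (p i) (p k) = 0"
    and "\<And>i k. 1 \<le> i \<Longrightarrow> 1 \<le> k \<Longrightarrow> B (u i) (u k) = 0"
    and "\<And>i k. 2 \<le> i \<Longrightarrow> 2 \<le> k \<Longrightarrow>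
           B (u (k - 1)) (pstar p i) - B (u (i - 1)) (pstar p k) \<in> I_Gamma p u"
  shows "\<forall>a\<in>I_Gamma p u. \<forall>b\<in>I_Gamma p u. B a b \<in> I_Gamma p u"
proof -
  define G where "G = {pstar p n - u (n - 1) | n. n \<ge> 2}"
  have generators: "B g h \<in> gen_ideal G" if "g \<in> G" "h \<in> G" for g h
  proof -
    from that obtain i k where "2 \<le> i" "2 \<le> k" "g = pstar p i - u (i - 1)" "h = pstar p k - u (k - 1)"
      unfolding G_def by blast
    then show ?thesis
      using poisson_bracket_Gamma_generators[of B p u i k, OF assms(1-3)] assms(4)[of i k]
      unfolding I_Gamma_def G_def by simp
  qed
  show ?thesis
    unfolding I_Gamma_def G_def[symmetric]
    by (blast intro: gen_ideal_closed_under_biderivation[OF poisson_bracket_derivation_right[OF assms(1)]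
        poisson_bracket_derivation_left[OF assms(1)]] generators)
qed

end
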